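(* Let $R$ be an associative unital division ring over a field of characteristic $0$. Let $\theta_{m,n}\in R$ be invertible for $m\in\mathbb{Z}$, $n\geq1$, with the convention $\theta_{m,0}^{-1}:=0$. Put $a_{m,n}=\theta_{m+1,n}\theta_{m,n}^{-1}$, $b_{m,n}=\theta_{m-1,n+1}\theta_{m,n}^{-1}$. Define semi-infinite matrices (indices $k\geq1$) $$(L_m)_{k,k+1}=1,\quad (L_m)_{k,k}=a_{m-1,k}+b_{m,k},\quad (L_m)_{k+1,k}=a_{m-1,k+1}b_{m,k},\qquad (M_m)_{k,k}=1,\quad (M_m)_{k+1,k}=b_{m,k},$$ all other entries zero. If $L_{m-1}M_m=M_mL_m$ for all $m\in\mathbb{Z}$, then for all $m\in\mathbb{Z}$ and $n\geq1$ $$\theta_{m+2,n}=\theta_{m,n+1}+\theta_{m+1,n}\bigl(\theta_{m,n}^{-1}-\theta_{m+2,n-1}^{-1}\bigr)\theta_{m+1,n}.$$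
   Context: Products of these banded semi-infinite matrices are computed entrywise as finite sums. *)

theory Defs
  imports Main
begin

definition theta_inv :: "(int \<Rightarrow> nat \<Rightarrow> 'a::division_ring) \<Rightarrow> int \<Rightarrow> nat \<Rightarrow> 'a" where
  "theta_inv \<theta> m n = (if n = 0 then 0 else inverse (\<theta> m n))"

definition acoef :: "(int \<Rightarrow> nat \<Rightarrow> 'a::division_ring) \<Rightarrow> int \<Rightarrow> nat \<Rightarrow> 'a" where
  "acoef \<theta> m n = \<theta> (m + 1) n * inverse (\<theta> m n)"

definition bcoef :: "(int \<Rightarrow> nat \<Rightarrow> 'a::division_ring) \<Rightarrow> int \<Rightarrow> nat \<Rightarrow> 'a" where
  "bcoef \<theta> m n = \<theta> (m - 1) (n + 1) * inverse (\<theta> m n)"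

text \<open>Semi-infinite matrices as functions nat => nat => 'a, indices k >= 1
  (entries with a zero index are set to 0 and are irrelevant).\<close>

definition Lmat :: "(int \<Rightarrow> nat \<Rightarrow> 'a::division_ring) \<Rightarrow> int \<Rightarrow> nat \<Rightarrow> nat \<Rightarrow> 'a" where
  "Lmat \<theta> m i j =
     (if i = 0 \<or> j = 0 then 0
      else if j = i + 1 then 1
      else if j = i then acoef \<theta> (m - 1) i + bcoef \<theta> m i
      else if i = j + 1 then acoef \<theta> (m - 1) (j + 1) * bcoef \<theta> m j
      else 0)"

definition Mmat :: "(int \<Rightarrow> nat \<Rightarrow> 'a::division_ring) \<Rightarrow> int \<Rightarrow> nat \<Rightarrow> nat \<Rightarrow> 'a" where
  "Mmat \<theta> m i j =
     (if i = 0 \<or> j = 0 then 0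
      else if i = j then 1
      else if i = j + 1 then bcoef \<theta> m j
      else 0)"

text \<open>Row i of the left factor is supported in columns {1..i+1} for all matrices used here
  (L has upper bandwidth 1, M is lower triangular), so this is the exact product.\<close>

definition bmult :: "(nat \<Rightarrow> nat \<Rightarrow> 'a::division_ring) \<Rightarrow> (nat \<Rightarrow> nat \<Rightarrow> 'a) \<Rightarrow> nat \<Rightarrow> nat \<Rightarrow> 'a" where
  "bmult A B i j = (\<Sum>k\<in>{1..i+1}. A i k * B k j)"

end

theory Submission
  imports Defs
begin

text \<open>Only the diagonal entries of the Lax equation L_{m+1} M_{m+2} = M_{m+2} L_{m+2} are
  needed. At position (n, n) they read
    a_{m,n} + b_{m+1,n} + b_{m+2,n} = b_{m+2,n-1} + a_{m+1,n} + b_{m+2,n},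
  where for n = 1 the term b_{m+2,0} is absent, exactly as the convention theta_{m,0}^{-1} = 0
  prescribes. Cancelling b_{m+2,n}, writing the coefficients in terms of theta and multiplying
  on the right by theta_{m+1,n} gives the claim.\<close>

lemma bmult_Lmat_Mmat_diag:
  assumes "n \<ge> 1"
  shows "bmult (Lmat \<theta> l) (Mmat \<theta> m) n n = acoef \<theta> (l - 1) n + bcoef \<theta> l n + bcoef \<theta> m n"
proof -
  have "bmult (Lmat \<theta> l) (Mmat \<theta> m) n n = (\<Sum>k\<in>{n, n + 1}. Lmat \<theta> l n k * Mmat \<theta> m k n)"
    unfolding bmult_def using assms
    by (intro sum.mono_neutral_right) (auto simp: Mmat_def)
  then show ?thesis
    using assms by (simp add: Lmat_def Mmat_def)
qed

lemma bmult_Mmat_Lmat_diag: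
  assumes "n \<ge> 1"
  shows "bmult (Mmat \<theta> m) (Lmat \<theta> l) n n
    = \<theta> (m - 1) n * theta_inv \<theta> m (n - 1) + acoef \<theta> (l - 1) n + bcoef \<theta> l n"
proof -
  have "bmult (Mmat \<theta> m) (Lmat \<theta> l) n n = (\<Sum>k\<in>{0..n + 1}. Mmat \<theta> m n k * Lmat \<theta> l k n)"
    unfolding bmult_def by (simp add: sum.atLeast_Suc_atMost Mmat_def)
  also have "\<dots> = (\<Sum>k\<in>{n - 1, n}. Mmat \<theta> m n k * Lmat \<theta> l k n)"
    using assms by (intro sum.mono_neutral_right) (auto simp: Mmat_def)
  finally show ?thesis
    using assms by (cases n) (auto simp: Lmat_def Mmat_def theta_inv_def bcoef_def)
qed

lemma eq_add_sandwich_of_inverse_eq: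
  fixes x p q r s :: "'a::division_ring"
  assumes "x \<noteq> 0" and "x * p + q * inverse x = r * inverse x + x * s"
  shows "r = q + x * (p - s) * x"
proof -
  have "(x * p + q * inverse x) * x = (r * inverse x + x * s) * x"
    using assms(2) by simp
  then have "x * p * x + q = r + x * s * x"
    using assms(1) by (simp add: distrib_right mult.assoc)
  then show ?thesis
    by (simp add: algebra_simps)
qed

theorem proposition4p3:
  fixes \<theta> :: "int \<Rightarrow> nat \<Rightarrow> 'a::{division_ring, ring_char_0}"
  assumes invertible: "\<And>m n. n \<ge> 1 \<Longrightarrow> \<theta> m n \<noteq> 0"
    and lax: "\<And>m i j. i \<ge> 1 \<Longrightarrow> j \<ge> 1 \<Longrightarrow>
        bmult (Lmat \<theta> (m - 1)) (Mmat \<theta> m) i j = bmult (Mmat \<theta> m) (Lmat \<theta> m) i j"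
  shows "\<forall>m n. n \<ge> 1 \<longrightarrow>
    \<theta> (m + 2) n = \<theta> m (n + 1)
      + \<theta> (m + 1) n * (theta_inv \<theta> m n - theta_inv \<theta> (m + 2) (n - 1)) * \<theta> (m + 1) n"
proof (intro allI impI)
  fix m :: int and n :: nat
  assume n: "n \<ge> 1"
  have "bmult (Lmat \<theta> (m + 1)) (Mmat \<theta> (m + 2)) n n
      = bmult (Mmat \<theta> (m + 2)) (Lmat \<theta> (m + 2)) n n"
    using lax[of n n "m + 2"] n by (simp add: algebra_simps)
  then have "acoef \<theta> m n + bcoef \<theta> (m + 1) n
      = \<theta> (m + 1) n * theta_inv \<theta> (m + 2) (n - 1) + acoef \<theta> (m + 1) n"
    using n by (simp add: bmult_Lmat_Mmat_diag bmult_Mmat_Lmat_diag ac_simps)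
  then have "\<theta> (m + 1) n * theta_inv \<theta> m n + \<theta> m (n + 1) * inverse (\<theta> (m + 1) n)
      = \<theta> (m + 2) n * inverse (\<theta> (m + 1) n) + \<theta> (m + 1) n * theta_inv \<theta> (m + 2) (n - 1)"
    using n by (simp add: acoef_def bcoef_def theta_inv_def ac_simps)
  then show "\<theta> (m + 2) n = \<theta> m (n + 1)
      + \<theta> (m + 1) n * (theta_inv \<theta> m n - theta_inv \<theta> (m + 2) (n - 1)) * \<theta> (m + 1) n"
    using invertible n by (intro eq_add_sandwich_of_inverse_eq) auto
qed

end
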